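(* Let $P=(P_t)_{t\ge0}$ be a $C_0$-semigroup on $(C_\kappa(E),\tau_\kappa^{\mathscr M})$ consisting of convex increasing (not necessarily linear) operators, with generator $(L,D(L))$. Then for every $\varphi\in C_\kappa(E)$ the function $u\colon[0,\infty)\to C_\kappa(E)$, $u(t):=P_t\varphi$, is a $D(L)$-viscosity solution of $u'(t)=Lu(t)$ for $t>0$, with $u(0)=\varphi$.
   Context: Standing assumptions and notation. $E$ is a completely regular Hausdorff topological space such that (1) every compact subset of $E$ is metrizable, (2) the Borel $\sigma$-algebra $\mathscr B(E)$ equals the Baire $\sigma$-algebra of $E$, and (3) a function $\varphi\colon E\to\mathbb R$ is continuous if and only if its restriction to every compact subset of $E$ is continuous. $\kappa\colon E\to(0,\infty)$ is a continuous weight function. $C_\kappa(E)$ denotes the space of continuous $\varphi\colon E\to\mathbb R$ with $\|\varphi\|_\kappa:=\sup_{x\in E}|\kappa(x)\varphi(x)|<\infty$. For a sequence $(C_n)$ of compact subsets of $E$ and positive reals $a_n\to0$ let $p_{\kappa,(C_n),(a_n)}(\varphi):=\sup_{n}a_n\sup_{x\in C_n}|\kappa(x)\varphi(x)|$; the mixed topology $\tau_\kappa^{\mathscr M}$ is the locally convex topology on $C_\kappa(E)$ generated by these seminorms. A family $P=(P_t)_{t\ge0}$ of maps $C_\kappa(E)\to C_\kappa(E)$ is a semigroup if $P_0\varphi=\varphi$ and $P_sP_t\varphi=P_{s+t}\varphi$. It is a $C_0$-semigroup on $(C_\kappa(E),\tau_\kappa^{\mathscr M})$ if moreover (iii) for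 every $T\ge0$, $\varepsilon>0$ and every seminorm $p_{\kappa,(K_n),(a_n)}$ there exist a seminorm $p_{\kappa,(C_n),(b_n)}$ and $\delta>0$ such that $p_{\kappa,(K_n),(a_n)}(P_t\varphi_1-P_t\varphi_2)<\varepsilon$ for all $t\in[0,T]$ and all $\varphi_1,\varphi_2$ with $p_{\kappa,(C_n),(b_n)}(\varphi_1-\varphi_2)<\delta$; and (iv) $\lim_{t\to0}p_{\kappa,(K_n),(a_n)}(P_t\varphi-\varphi)=0$ for every $\varphi$ and seminorm. Its generator $L$: $D(L)$ is the set of $\varphi$ for which $\tau_\kappa^{\mathscr M}\text{-}\lim_{t\to0}(P_t\varphi-\varphi)/t$ exists, and $L\varphi$ is this limit. An operator $T$ on $C_\kappa(E)$ is increasing if $\varphi_1\le\varphi_2$ implies $T\varphi_1\le T\varphi_2$, and convex if $T(\lambda\varphi_1+(1-\lambda)\varphi_2)\le\lambda T\varphi_1+(1-\lambda)T\varphi_2$ for $\lambda\in[0,1]$. Viscosity solutions: for $L\colon D\to C_\kappa(E)$ with $D\subset C_\kappa(E)$ nonempty, a $\tau_\kappa^{\mathscr M}$-continuous $u\colon[0,\infty)\to C_\kappa(E)$ is a $D$-viscosity subsolution of $u'=Lu$ if for every $t>0$, $x\in E$ and every ($\tau_\kappa^{\mathscr M}$-)differentiable $\psi\colon(0,\infty)\to C_\kappa(E)$ with $\psi(t)\in D$, $\psi(t)(x)=u(t)(x)$ and $\psi(s)\ge u(s)$ for all $s>0$, one has $\psi'(t)(x)\le(L\psi(t))(x)$;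 supersolution analogously with $\psi(s)\le u(s)$ for all $s>0$ and $\psi'(t)(x)\ge(L\psi(t))(x)$; a viscosity solution is both. *)

theory Defs
  imports "HOL-Analysis.Analysis" "HOL-Probability.Probability"
begin

text \<open>The underlying space E is the type 'a with its topology (topspace = UNIV).\<close>

definition baire_sets :: "'a::topological_space set set" where
  "baire_sets = sigma_sets UNIV {f -` {0} | f :: 'a \<Rightarrow> real. continuous_on UNIV f}"

definition standing_space :: "'a::topological_space itself \<Rightarrow> bool" where
  "standing_space _ \<longleftrightarrow>
     completely_regular_space (euclidean :: 'a topology) \<and>
     Hausdorff_space (euclidean :: 'a topology) \<and>
     (\<forall>K :: 'a set. compact K \<longrightarrow> metrizable_space (subtopology euclidean K)) \<and>
     sets (borel :: 'a measure) = baire_sets \<and>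
     (\<forall>f :: 'a \<Rightarrow> real. continuous_on UNIV f \<longleftrightarrow> (\<forall>K. compact K \<longrightarrow> continuous_on K f))"

definition weight :: "('a::topological_space \<Rightarrow> real) \<Rightarrow> bool" where
  "weight \<kappa> \<longleftrightarrow> continuous_on UNIV \<kappa> \<and> (\<forall>x. \<kappa> x > 0)"

definition Ck :: "('a::topological_space \<Rightarrow> real) \<Rightarrow> ('a \<Rightarrow> real) set" where
  "Ck \<kappa> = {\<phi>. continuous_on UNIV \<phi> \<and> (\<exists>M. \<forall>x. \<bar>\<kappa> x * \<phi> x\<bar> \<le> M)}"

definition admissible :: "(nat \<Rightarrow> 'a::topological_space set) \<Rightarrow> (nat \<Rightarrow> real) \<Rightarrow> bool" where
  "admissible C a \<longleftrightarrow> (\<forall>n. compact (C n)) \<and> (\<forall>n. a n > 0) \<and> a \<longlonglongrightarrow> 0"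

text \<open>The seminorm p_{kappa,(C_n),(a_n)}; all quantities are nonnegative, so inserting 0
  only fixes the value of suprema over empty sets.\<close>
definition pmix :: "('a \<Rightarrow> real) \<Rightarrow> (nat \<Rightarrow> 'a set) \<Rightarrow> (nat \<Rightarrow> real) \<Rightarrow> ('a \<Rightarrow> real) \<Rightarrow> real" where
  "pmix \<kappa> C a \<phi> = Sup (insert 0 {a n * Sup (insert 0 ((\<lambda>x. \<bar>\<kappa> x * \<phi> x\<bar>) ` C n)) | n. True})"

definition mixed_tendsto :: "('a::topological_space \<Rightarrow> real) \<Rightarrow> ('b \<Rightarrow> 'a \<Rightarrow> real) \<Rightarrow> ('a \<Rightarrow> real) \<Rightarrow> 'b filter \<Rightarrow> bool" where
  "mixed_tendsto \<kappa> f g F \<longleftrightarrow>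
     (\<forall>C a. admissible C a \<longrightarrow> ((\<lambda>s. pmix \<kappa> C a (\<lambda>x. f s x - g x)) \<longlongrightarrow> 0) F)"

definition C0_semigroup :: "('a::topological_space \<Rightarrow> real) \<Rightarrow> (real \<Rightarrow> ('a \<Rightarrow> real) \<Rightarrow> ('a \<Rightarrow> real)) \<Rightarrow> bool" where
  "C0_semigroup \<kappa> P \<longleftrightarrow>
     (\<forall>t\<ge>0. \<forall>\<phi>\<in>Ck \<kappa>. P t \<phi> \<in> Ck \<kappa>) \<and>
     (\<forall>\<phi>\<in>Ck \<kappa>. P 0 \<phi> = \<phi>) \<and>
     (\<forall>s\<ge>0. \<forall>t\<ge>0. \<forall>\<phi>\<in>Ck \<kappa>. P s (P t \<phi>) = P (s + t) \<phi>) \<and>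
     (\<forall>T\<ge>0. \<forall>\<epsilon>>0. \<forall>K a. admissible K a \<longrightarrow>
        (\<exists>C b \<delta>. admissible C b \<and> \<delta> > 0 \<and>
           (\<forall>t\<in>{0..T}. \<forall>\<phi>1\<in>Ck \<kappa>. \<forall>\<phi>2\<in>Ck \<kappa>.
              pmix \<kappa> C b (\<lambda>x. \<phi>1 x - \<phi>2 x) < \<delta> \<longrightarrow>
              pmix \<kappa> K a (\<lambda>x. P t \<phi>1 x - P t \<phi>2 x) < \<epsilon>))) \<and>
     (\<forall>\<phi>\<in>Ck \<kappa>. \<forall>K a. admissible K a \<longrightarrow>
        ((\<lambda>t. pmix \<kappa> K a (\<lambda>x. P t \<phi> x - \<phi> x)) \<longlongrightarrow> 0) (at_right 0))"

definition increasing_op :: "('a \<Rightarrow> real) set \<Rightarrow> (('a \<Rightarrow> real) \<Rightarrow> ('a \<Rightarrow> real)) \<Rightarrow> bool" where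
  "increasing_op S T \<longleftrightarrow> (\<forall>\<phi>1\<in>S. \<forall>\<phi>2\<in>S. (\<forall>x. \<phi>1 x \<le> \<phi>2 x) \<longrightarrow> (\<forall>x. T \<phi>1 x \<le> T \<phi>2 x))"

definition convex_op :: "('a \<Rightarrow> real) set \<Rightarrow> (('a \<Rightarrow> real) \<Rightarrow> ('a \<Rightarrow> real)) \<Rightarrow> bool" where
  "convex_op S T \<longleftrightarrow> (\<forall>\<phi>1\<in>S. \<forall>\<phi>2\<in>S. \<forall>c::real. 0 \<le> c \<and> c \<le> 1 \<longrightarrow>
     (\<forall>x. T (\<lambda>y. c * \<phi>1 y + (1 - c) * \<phi>2 y) x \<le> c * T \<phi>1 x + (1 - c) * T \<phi>2 x))"

definition gen_has :: "('a::topological_space \<Rightarrow> real) \<Rightarrow> (real \<Rightarrow> ('a \<Rightarrow> real) \<Rightarrow> ('a \<Rightarrow> real)) \<Rightarrow> ('a \<Rightarrow> real) \<Rightarrow> ('a \<Rightarrow> real) \<Rightarrow> bool" where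
  "gen_has \<kappa> P \<phi> \<psi> \<longleftrightarrow> \<psi> \<in> Ck \<kappa> \<and>
     mixed_tendsto \<kappa> (\<lambda>t x. (P t \<phi> x - \<phi> x) / t) \<psi> (at_right 0)"

definition gen_dom :: "('a::topological_space \<Rightarrow> real) \<Rightarrow> (real \<Rightarrow> ('a \<Rightarrow> real) \<Rightarrow> ('a \<Rightarrow> real)) \<Rightarrow> ('a \<Rightarrow> real) set" where
  "gen_dom \<kappa> P = {\<phi> \<in> Ck \<kappa>. \<exists>\<psi>. gen_has \<kappa> P \<phi> \<psi>}"

definition gen :: "('a::topological_space \<Rightarrow> real) \<Rightarrow> (real \<Rightarrow> ('a \<Rightarrow> real) \<Rightarrow> ('a \<Rightarrow> real)) \<Rightarrow> ('a \<Rightarrow> real) \<Rightarrow> ('a \<Rightarrow> real)" where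
  "gen \<kappa> P \<phi> = (THE \<psi>. gen_has \<kappa> P \<phi> \<psi>)"

definition mixed_has_derivative :: "('a::topological_space \<Rightarrow> real) \<Rightarrow> (real \<Rightarrow> 'a \<Rightarrow> real) \<Rightarrow> ('a \<Rightarrow> real) \<Rightarrow> real \<Rightarrow> bool" where
  "mixed_has_derivative \<kappa> \<psi> d t \<longleftrightarrow> d \<in> Ck \<kappa> \<and>
     mixed_tendsto \<kappa> (\<lambda>s x. (\<psi> s x - \<psi> t x) / (s - t)) d (at t within {0<..})"

definition mixed_continuous :: "('a::topological_space \<Rightarrow> real) \<Rightarrow> (real \<Rightarrow> 'a \<Rightarrow> real) \<Rightarrow> bool" where
  "mixed_continuous \<kappa> u \<longleftrightarrow> (\<forall>t\<ge>0. u t \<in> Ck \<kappa>) \<and>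
     (\<forall>t\<ge>0. mixed_tendsto \<kappa> u (u t) (at t within {0..}))"

definition visc_sub :: "('a::topological_space \<Rightarrow> real) \<Rightarrow> ('a \<Rightarrow> real) set \<Rightarrow> (('a \<Rightarrow> real) \<Rightarrow> ('a \<Rightarrow> real)) \<Rightarrow> (real \<Rightarrow> 'a \<Rightarrow> real) \<Rightarrow> bool" where
  "visc_sub \<kappa> D L u \<longleftrightarrow> mixed_continuous \<kappa> u \<and>
     (\<forall>t>0. \<forall>x. \<forall>\<psi> \<psi>'. (\<forall>s>0. \<psi> s \<in> Ck \<kappa> \<and> mixed_has_derivative \<kappa> \<psi> (\<psi>' s) s) \<longrightarrow>
        \<psi> t \<in> D \<longrightarrow> \<psi> t x = u t x \<longrightarrow> (\<forall>s>0. \<forall>y. \<psi> s y \<ge> u s y) \<longrightarrow>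
        \<psi>' t x \<le> L (\<psi> t) x)"

definition visc_super :: "('a::topological_space \<Rightarrow> real) \<Rightarrow> ('a \<Rightarrow> real) set \<Rightarrow> (('a \<Rightarrow> real) \<Rightarrow> ('a \<Rightarrow> real)) \<Rightarrow> (real \<Rightarrow> 'a \<Rightarrow> real) \<Rightarrow> bool" where
  "visc_super \<kappa> D L u \<longleftrightarrow> mixed_continuous \<kappa> u \<and>
     (\<forall>t>0. \<forall>x. \<forall>\<psi> \<psi>'. (\<forall>s>0. \<psi> s \<in> Ck \<kappa> \<and> mixed_has_derivative \<kappa> \<psi> (\<psi>' s) s) \<longrightarrow>
        \<psi> t \<in> D \<longrightarrow> \<psi> t x = u t x \<longrightarrow> (\<forall>s>0. \<forall>y. \<psi> s y \<le> u s y) \<longrightarrow>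
        \<psi>' t x \<ge> L (\<psi> t) x)"

definition visc_sol where
  "visc_sol \<kappa> D L u \<longleftrightarrow> visc_sub \<kappa> D L u \<and> visc_super \<kappa> D L u"

end

theory Submission
  imports Defs
begin

text \<open>Let \<open>\<psi>\<close> touch the orbit \<open>u(s) = P\<^sub>s \<phi>\<close> from above at \<open>(t, x)\<close>. For small \<open>h > 0\<close> write
  \<open>\<psi>(t - h) = h F\<^sub>h + (1 - h) \<psi>(t)\<close>, where \<open>F\<^sub>h = \<psi>(t) - (\<psi>(t) - \<psi>(t - h))/h \<rightarrow> \<psi>(t) - \<psi>'(t)\<close>.
  The semigroup law, monotonicity and convexity give
  \<open>\<psi>(t) x = P\<^sub>h u(t - h) x \<le> P\<^sub>h \<psi>(t - h) x \<le> h P\<^sub>h F\<^sub>h x + (1 - h) P\<^sub>h \<psi>(t) x\<close>, i.e.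
  \<open>P\<^sub>h \<psi>(t) x - P\<^sub>h F\<^sub>h x \<le> (P\<^sub>h \<psi>(t) x - \<psi>(t) x)/h\<close>. Since the \<open>P\<^sub>h\<close> are equicontinuous for small
  \<open>h\<close>, \<open>P\<^sub>h F\<^sub>h x \<rightarrow> \<psi>(t) x - \<psi>'(t) x\<close>, and letting \<open>h \<rightarrow> 0\<close> yields \<open>\<psi>'(t) x \<le> L \<psi>(t) x\<close>.
  From below one writes instead \<open>\<psi>(t) = h F\<^sub>h + (1 - h) \<psi>(t - h)\<close> with \<open>F\<^sub>h \<rightarrow> \<psi>(t) + \<psi>'(t)\<close> and applies
  convexity before monotonicity.\<close>

definition weighted_sup :: "('a \<Rightarrow> real) \<Rightarrow> 'a set \<Rightarrow> ('a \<Rightarrow> real) \<Rightarrow> real" where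
  "weighted_sup \<kappa> K f = Sup (insert 0 ((\<lambda>x. \<bar>\<kappa> x * f x\<bar>) ` K))"

definition weighted_bounded :: "('a \<Rightarrow> real) \<Rightarrow> ('a \<Rightarrow> real) \<Rightarrow> bool" where
  "weighted_bounded \<kappa> f \<longleftrightarrow> (\<exists>M. \<forall>y. \<bar>\<kappa> y * f y\<bar> \<le> M)"

lemma weighted_sup_least:
  "(\<And>y. y \<in> K \<Longrightarrow> \<bar>\<kappa> y * f y\<bar> \<le> B) \<Longrightarrow> 0 \<le> B \<Longrightarrow> weighted_sup \<kappa> K f \<le> B"
  unfolding weighted_sup_def by (rule cSup_least) auto

lemma weighted_bounded_bdd_above:
  assumes "weighted_bounded \<kappa> f"
  shows "bdd_above (insert 0 ((\<lambda>x. \<bar>\<kappa> x * f x\<bar>) ` K))"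
proof -
  obtain M where "\<And>y. \<bar>\<kappa> y * f y\<bar> \<le> M" using assms unfolding weighted_bounded_def by blast
  then show ?thesis by (intro bdd_aboveI[of _ "max 0 M"]) (auto simp: le_max_iff_disj)
qed

lemma weighted_sup_upper:
  "weighted_bounded \<kappa> f \<Longrightarrow> y \<in> K \<Longrightarrow> \<bar>\<kappa> y * f y\<bar> \<le> weighted_sup \<kappa> K f"
  unfolding weighted_sup_def by (rule cSup_upper[OF _ weighted_bounded_bdd_above]) auto

lemma weighted_sup_nonneg: "weighted_bounded \<kappa> f \<Longrightarrow> 0 \<le> weighted_sup \<kappa> K f"
  unfolding weighted_sup_def by (rule cSup_upper[OF _ weighted_bounded_bdd_above]) auto

lemma weighted_sup_uniform_bound:
  assumes "weighted_bounded \<kappa> f"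
  obtains M where "0 \<le> M" "\<And>K. weighted_sup \<kappa> K f \<le> M"
proof -
  obtain M where M: "\<And>y. \<bar>\<kappa> y * f y\<bar> \<le> M" using assms unfolding weighted_bounded_def by blast
  then have "0 \<le> M" by (meson abs_ge_zero order_trans)
  with M show ?thesis by (intro that weighted_sup_least) auto
qed

lemma weighted_sup_triangle:
  assumes "weighted_bounded \<kappa> f" "weighted_bounded \<kappa> g"
  shows "weighted_sup \<kappa> K (\<lambda>y. f y + g y) \<le> weighted_sup \<kappa> K f + weighted_sup \<kappa> K g"
proof (rule weighted_sup_least)
  fix y assume "y \<in> K"
  then have "\<bar>\<kappa> y * f y\<bar> + \<bar>\<kappa> y * g y\<bar> \<le> weighted_sup \<kappa> K f + weighted_sup \<kappa> K g"
    using assms by (intro add_mono weighted_sup_upper)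
  then show "\<bar>\<kappa> y * (f y + g y)\<bar> \<le> weighted_sup \<kappa> K f + weighted_sup \<kappa> K g"
    by (smt (verit) distrib_left)
qed (simp add: assms weighted_sup_nonneg)

lemma weighted_sup_scale:
  assumes "weighted_bounded \<kappa> f"
  shows "weighted_sup \<kappa> K (\<lambda>y. c * f y) \<le> \<bar>c\<bar> * weighted_sup \<kappa> K f"
proof (rule weighted_sup_least)
  fix y assume "y \<in> K"
  then have "\<bar>c\<bar> * \<bar>\<kappa> y * f y\<bar> \<le> \<bar>c\<bar> * weighted_sup \<kappa> K f"
    using assms by (intro mult_left_mono weighted_sup_upper) auto
  then show "\<bar>\<kappa> y * (c * f y)\<bar> \<le> \<bar>c\<bar> * weighted_sup \<kappa> K f"
    by (simp add: abs_mult mult.left_commute)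
qed (simp add: weighted_sup_nonneg[OF assms])

lemma pmix_eq_Sup_weighted_sup:
  "pmix \<kappa> C a f = Sup (insert 0 (range (\<lambda>n. a n * weighted_sup \<kappa> (C n) f)))"
  unfolding pmix_def weighted_sup_def by (simp add: full_SetCompr_eq[symmetric])

lemma admissible_bounded:
  assumes "admissible C a"
  obtains A where "0 \<le> A" "\<And>n. a n \<le> A"
proof -
  have "Bseq a" using assms unfolding admissible_def by (blast intro: convergent_imp_Bseq convergentI)
  then obtain A where "A > 0" "\<And>n. norm (a n) \<le> A" by (auto elim: BseqE)
  then show ?thesis by (intro that[of A]) (auto intro: order_trans[OF abs_ge_self])
qed

lemma pmix_bdd_above:
  assumes "admissible C a" "weighted_bounded \<kappa> f"
  shows "bdd_above (insert 0 (range (\<lambda>n. a n * weighted_sup \<kappa> (C n) f)))"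
proof -
  obtain A where A: "0 \<le> A" "\<And>n. a n \<le> A" using admissible_bounded assms(1) by blast
  obtain M where M: "0 \<le> M" "\<And>K. weighted_sup \<kappa> K f \<le> M"
    using weighted_sup_uniform_bound assms(2) by blast
  have "a n * weighted_sup \<kappa> (C n) f \<le> A * M" for n
    using A M weighted_sup_nonneg[OF assms(2)] by (intro mult_mono) auto
  with A M show ?thesis by (intro bdd_aboveI[of _ "A * M"]) auto
qed

lemma pmix_upper:
  "admissible C a \<Longrightarrow> weighted_bounded \<kappa> f \<Longrightarrow> a n * weighted_sup \<kappa> (C n) f \<le> pmix \<kappa> C a f"
  unfolding pmix_eq_Sup_weighted_sup by (rule cSup_upper[OF _ pmix_bdd_above]) auto

lemma pmix_nonneg: "admissible C a \<Longrightarrow> weighted_bounded \<kappa> f \<Longrightarrow> 0 \<le> pmix \<kappa> C a f"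
  unfolding pmix_eq_Sup_weighted_sup by (rule cSup_upper[OF _ pmix_bdd_above]) auto

lemma pmix_least:
  "(\<And>n. a n * weighted_sup \<kappa> (C n) f \<le> B) \<Longrightarrow> 0 \<le> B \<Longrightarrow> pmix \<kappa> C a f \<le> B"
  unfolding pmix_eq_Sup_weighted_sup by (rule cSup_least) auto

lemma pmix_cong:
  "(\<And>y. \<bar>\<kappa> y * f y\<bar> = \<bar>\<kappa> y * g y\<bar>) \<Longrightarrow> pmix \<kappa> C a f = pmix \<kappa> C a g"
  unfolding pmix_def by simp

lemma pmix_diff_commute: "pmix \<kappa> C a (\<lambda>y. f y - g y) = pmix \<kappa> C a (\<lambda>y. g y - f y)"
  by (rule pmix_cong) (simp add: abs_minus_commute right_diff_distrib)

lemma pmix_zero: "pmix \<kappa> C a (\<lambda>y. 0) = 0"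
proof -
  have "weighted_sup \<kappa> K (\<lambda>y. 0) = 0" for K
    unfolding weighted_sup_def by (cases "K = {}") (auto simp: image_constant)
  then show ?thesis unfolding pmix_eq_Sup_weighted_sup by simp
qed

lemma pmix_triangle:
  assumes adm: "admissible C a" and "weighted_bounded \<kappa> f" "weighted_bounded \<kappa> g"
  shows "pmix \<kappa> C a (\<lambda>y. f y + g y) \<le> pmix \<kappa> C a f + pmix \<kappa> C a g"
proof (rule pmix_least)
  fix n
  have "0 \<le> a n" using adm unfolding admissible_def by (simp add: less_imp_le)
  then have "a n * weighted_sup \<kappa> (C n) (\<lambda>y. f y + g y)
      \<le> a n * weighted_sup \<kappa> (C n) f + a n * weighted_sup \<kappa> (C n) g"
    using assms by (simp add: mult_left_mono weighted_sup_triangle flip: distrib_left)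
  also have "\<dots> \<le> pmix \<kappa> C a f + pmix \<kappa> C a g"
    using assms by (intro add_mono pmix_upper)
  finally show "a n * weighted_sup \<kappa> (C n) (\<lambda>y. f y + g y) \<le> pmix \<kappa> C a f + pmix \<kappa> C a g" .
qed (simp add: assms pmix_nonneg)

lemma pmix_scale:
  assumes adm: "admissible C a" and "weighted_bounded \<kappa> f"
  shows "pmix \<kappa> C a (\<lambda>y. c * f y) \<le> \<bar>c\<bar> * pmix \<kappa> C a f"
proof (rule pmix_least)
  fix n
  have "0 \<le> a n" using adm unfolding admissible_def by (simp add: less_imp_le)
  then have "a n * weighted_sup \<kappa> (C n) (\<lambda>y. c * f y) \<le> \<bar>c\<bar> * (a n * weighted_sup \<kappa> (C n) f)"
    using mult_left_mono[OF weighted_sup_scale[OF assms(2)], of "a n" _ c] by (simp add: mult.left_commute)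
  also have "\<dots> \<le> \<bar>c\<bar> * pmix \<kappa> C a f"
    using assms by (intro mult_left_mono pmix_upper) auto
  finally show "a n * weighted_sup \<kappa> (C n) (\<lambda>y. c * f y) \<le> \<bar>c\<bar> * pmix \<kappa> C a f" .
qed (simp add: assms pmix_nonneg)

lemma admissible_singleton: "admissible (\<lambda>n. {x}) (\<lambda>n. 1 / real (Suc n))"
  unfolding admissible_def using LIMSEQ_inverse_real_of_nat by (simp add: inverse_eq_divide)

lemma pmix_singleton: "pmix \<kappa> (\<lambda>n. {x}) (\<lambda>n. 1 / real (Suc n)) f = \<bar>\<kappa> x * f x\<bar>"
proof -
  let ?v = "\<bar>\<kappa> x * f x\<bar>"
  have "Sup (insert 0 (range (\<lambda>n. 1 / real (Suc n) * ?v))) = ?v"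
  proof (rule cSup_eq_maximum)
    show "?v \<in> insert 0 (range (\<lambda>n. 1 / real (Suc n) * ?v))"
      by (auto intro: range_eqI[of _ _ 0])
    show "z \<le> ?v" if "z \<in> insert 0 (range (\<lambda>n. 1 / real (Suc n) * ?v))" for z
      using that by (auto simp: divide_le_eq mult_le_cancel_left1)
  qed
  moreover have "weighted_sup \<kappa> {x} f = ?v"
    unfolding weighted_sup_def by (simp add: cSup_insert_If sup_absorb2)
  ultimately show ?thesis unfolding pmix_eq_Sup_weighted_sup by simp
qed

lemma Ck_imp_weighted_bounded: "f \<in> Ck \<kappa> \<Longrightarrow> weighted_bounded \<kappa> f"
  by (simp add: Ck_def weighted_bounded_def)

lemma Ck_add: "f \<in> Ck \<kappa> \<Longrightarrow> g \<in> Ck \<kappa> \<Longrightarrow> (\<lambda>y. f y + g y) \<in> Ck \<kappa>"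
proof -
  assume "f \<in> Ck \<kappa>" "g \<in> Ck \<kappa>"
  then obtain M N where M: "\<forall>y. \<bar>\<kappa> y * f y\<bar> \<le> M" and N: "\<forall>y. \<bar>\<kappa> y * g y\<bar> \<le> N"
    and "continuous_on UNIV f" "continuous_on UNIV g" unfolding Ck_def by blast
  have "\<bar>\<kappa> y * (f y + g y)\<bar> \<le> M + N" for y
    using M[rule_format, of y] N[rule_format, of y] abs_triangle_ineq[of "\<kappa> y * f y" "\<kappa> y * g y"]
    by (simp add: distrib_left)
  with \<open>continuous_on UNIV f\<close> \<open>continuous_on UNIV g\<close> show ?thesis
    unfolding Ck_def by (blast intro: continuous_on_add)
qed

lemma Ck_cmult: "f \<in> Ck \<kappa> \<Longrightarrow> (\<lambda>y. c * f y) \<in> Ck \<kappa>"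
proof -
  assume "f \<in> Ck \<kappa>"
  then obtain M where M: "\<forall>y. \<bar>\<kappa> y * f y\<bar> \<le> M" and "continuous_on UNIV f" unfolding Ck_def by blast
  have "\<bar>\<kappa> y * (c * f y)\<bar> \<le> \<bar>c\<bar> * M" for y
    using mult_left_mono[OF spec[OF M, of y], of "\<bar>c\<bar>"] by (simp add: abs_mult mult.left_commute)
  with \<open>continuous_on UNIV f\<close> show ?thesis
    unfolding Ck_def by (blast intro: continuous_on_mult_left)
qed

lemma Ck_diff: "f \<in> Ck \<kappa> \<Longrightarrow> g \<in> Ck \<kappa> \<Longrightarrow> (\<lambda>y. f y - g y) \<in> Ck \<kappa>"
  using Ck_add[OF _ Ck_cmult[of g \<kappa> "-1"]] by simp

lemma Ck_divide: "f \<in> Ck \<kappa> \<Longrightarrow> (\<lambda>y. f y / c) \<in> Ck \<kappa>"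
  using Ck_cmult[of f \<kappa> "1 / c"] by simp

lemma mixed_tendsto_imp_tendsto:
  assumes "weight \<kappa>" "mixed_tendsto \<kappa> F f G"
  shows "((\<lambda>s. F s x) \<longlongrightarrow> f x) G"
proof -
  have "\<kappa> x > 0" using assms(1) unfolding weight_def by blast
  have "((\<lambda>s. pmix \<kappa> (\<lambda>n. {x}) (\<lambda>n. 1 / real (Suc n)) (\<lambda>y. F s y - f y)) \<longlongrightarrow> 0) G"
    using assms(2) admissible_singleton unfolding mixed_tendsto_def by blast
  then have "((\<lambda>s. \<bar>\<kappa> x * (F s x - f x)\<bar>) \<longlongrightarrow> 0) G"
    unfolding pmix_singleton .
  then have "((\<lambda>s. \<kappa> x * (F s x - f x)) \<longlongrightarrow> \<kappa> x * 0) G"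
    by (simp only: tendsto_rabs_zero_iff mult_zero_right)
  with \<open>\<kappa> x > 0\<close> have "((\<lambda>s. F s x - f x) \<longlongrightarrow> 0) G"
    by (simp only: tendsto_mult_left_iff less_irrefl)
  then show ?thesis by (rule LIM_zero_cancel)
qed

lemma mixed_tendsto_compose:
  fixes \<kappa> :: "'a::topological_space \<Rightarrow> real"
  assumes "mixed_tendsto \<kappa> F f G" "filterlim k G H"
  shows "mixed_tendsto \<kappa> (\<lambda>s. F (k s)) f H"
  unfolding mixed_tendsto_def
proof (intro allI impI)
  fix C :: "nat \<Rightarrow> 'a set" and a assume "admissible C a"
  with assms(1) have "((\<lambda>s. pmix \<kappa> C a (\<lambda>x. F s x - f x)) \<longlongrightarrow> 0) G"
    unfolding mixed_tendsto_def by blast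
  from filterlim_compose[OF this assms(2)]
  show "((\<lambda>s. pmix \<kappa> C a (\<lambda>x. F (k s) x - f x)) \<longlongrightarrow> 0) H" .
qed

lemma mixed_tendsto_cong:
  "\<forall>\<^sub>F s in G. F s = H s \<Longrightarrow> mixed_tendsto \<kappa> F f G \<longleftrightarrow> mixed_tendsto \<kappa> H f G"
  unfolding mixed_tendsto_def by (intro all_cong1 imp_cong refl tendsto_cong) (auto elim: eventually_mono)

lemma mixed_tendsto_const: "mixed_tendsto \<kappa> (\<lambda>s. f) f G"
  unfolding mixed_tendsto_def by (simp add: pmix_zero)

lemma mixed_tendsto_iff_diff_tendsto_zero:
  "mixed_tendsto \<kappa> F f G \<longleftrightarrow> mixed_tendsto \<kappa> (\<lambda>s y. F s y - f y) (\<lambda>y. 0) G"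
  unfolding mixed_tendsto_def by simp

lemma pmix_tendsto_zero_dominated:
  assumes "admissible C a" "\<forall>\<^sub>F s in G. weighted_bounded \<kappa> (D s) \<and> pmix \<kappa> C a (D s) \<le> B s"
    and "(B \<longlongrightarrow> 0) G"
  shows "((\<lambda>s. pmix \<kappa> C a (D s)) \<longlongrightarrow> 0) G"
  using assms(2) by (intro tendsto_sandwich[OF _ _ tendsto_const assms(3)])
    (auto elim: eventually_mono intro: pmix_nonneg[OF assms(1)])

lemma mixed_tendsto_add:
  fixes \<kappa> :: "'a::topological_space \<Rightarrow> real"
  assumes F: "mixed_tendsto \<kappa> F f G" and H: "mixed_tendsto \<kappa> H h G"
    and FH: "\<forall>\<^sub>F s in G. F s \<in> Ck \<kappa> \<and> H s \<in> Ck \<kappa>" and f: "f \<in> Ck \<kappa>" and h: "h \<in> Ck \<kappa>"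
  shows "mixed_tendsto \<kappa> (\<lambda>s y. F s y + H s y) (\<lambda>y. f y + h y) G"
  unfolding mixed_tendsto_def
proof (intro allI impI)
  fix C :: "nat \<Rightarrow> 'a set" and a assume adm: "admissible C a"
  have "\<forall>\<^sub>F s in G. weighted_bounded \<kappa> (\<lambda>y. F s y + H s y - (f y + h y)) \<and>
      pmix \<kappa> C a (\<lambda>y. F s y + H s y - (f y + h y))
        \<le> pmix \<kappa> C a (\<lambda>y. F s y - f y) + pmix \<kappa> C a (\<lambda>y. H s y - h y)"
    using FH
  proof eventually_elim
    case (elim s)
    then have "(\<lambda>y. F s y - f y) \<in> Ck \<kappa>" "(\<lambda>y. H s y - h y) \<in> Ck \<kappa>"
      using f h by (auto intro: Ck_diff)
    moreover have "(\<lambda>y. F s y + H s y - (f y + h y)) = (\<lambda>y. (F s y - f y) + (H s y - h y))"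
      by (simp add: fun_eq_iff)
    ultimately show ?case
      by (simp add: Ck_add Ck_imp_weighted_bounded pmix_triangle[OF adm])
  qed
  moreover have "((\<lambda>s. pmix \<kappa> C a (\<lambda>y. F s y - f y) + pmix \<kappa> C a (\<lambda>y. H s y - h y)) \<longlongrightarrow> 0) G"
    using F H adm unfolding mixed_tendsto_def by (auto intro: tendsto_add_zero)
  ultimately show "((\<lambda>s. pmix \<kappa> C a (\<lambda>y. F s y + H s y - (f y + h y))) \<longlongrightarrow> 0) G"
    by (rule pmix_tendsto_zero_dominated[OF adm])
qed

lemma mixed_tendsto_scale:
  fixes \<kappa> :: "'a::topological_space \<Rightarrow> real"
  assumes c: "(c \<longlongrightarrow> c0) G" and F: "mixed_tendsto \<kappa> F f G"
    and FC: "\<forall>\<^sub>F s in G. F s \<in> Ck \<kappa>" and f: "f \<in> Ck \<kappa>"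
  shows "mixed_tendsto \<kappa> (\<lambda>s y. c s * F s y) (\<lambda>y. c0 * f y) G"
  unfolding mixed_tendsto_def
proof (intro allI impI)
  fix C :: "nat \<Rightarrow> 'a set" and a assume adm: "admissible C a"
  have "\<forall>\<^sub>F s in G. weighted_bounded \<kappa> (\<lambda>y. c s * F s y - c0 * f y) \<and>
      pmix \<kappa> C a (\<lambda>y. c s * F s y - c0 * f y)
        \<le> \<bar>c s\<bar> * pmix \<kappa> C a (\<lambda>y. F s y - f y) + \<bar>c s - c0\<bar> * pmix \<kappa> C a f"
    using FC
  proof eventually_elim
    case (elim s)
    then have Ff: "(\<lambda>y. F s y - f y) \<in> Ck \<kappa>"
      using f by (auto intro: Ck_diff)
    have eq: "(\<lambda>y. c s * F s y - c0 * f y) = (\<lambda>y. c s * (F s y - f y) + (c s - c0) * f y)"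
      by (simp add: fun_eq_iff algebra_simps)
    have "pmix \<kappa> C a (\<lambda>y. c s * (F s y - f y) + (c s - c0) * f y)
        \<le> pmix \<kappa> C a (\<lambda>y. c s * (F s y - f y)) + pmix \<kappa> C a (\<lambda>y. (c s - c0) * f y)"
      using Ff f by (intro pmix_triangle[OF adm] Ck_imp_weighted_bounded Ck_cmult)
    also have "\<dots> \<le> \<bar>c s\<bar> * pmix \<kappa> C a (\<lambda>y. F s y - f y) + \<bar>c s - c0\<bar> * pmix \<kappa> C a f"
      using Ff f by (intro add_mono pmix_scale[OF adm] Ck_imp_weighted_bounded)
    finally show ?case
      unfolding eq using Ff f by (simp add: Ck_add Ck_cmult Ck_imp_weighted_bounded)
  qed
  moreover have "((\<lambda>s. \<bar>c s\<bar> * pmix \<kappa> C a (\<lambda>y. F s y - f y) + \<bar>c s - c0\<bar> * pmix \<kappa> C a f)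
      \<longlongrightarrow> \<bar>c0\<bar> * 0 + \<bar>c0 - c0\<bar> * pmix \<kappa> C a f) G"
    using F adm unfolding mixed_tendsto_def by (intro tendsto_intros c) auto
  ultimately show "((\<lambda>s. pmix \<kappa> C a (\<lambda>y. c s * F s y - c0 * f y)) \<longlongrightarrow> 0) G"
    by (intro pmix_tendsto_zero_dominated[OF adm]) auto
qed

lemma mixed_tendsto_diff:
  fixes \<kappa> :: "'a::topological_space \<Rightarrow> real"
  assumes F: "mixed_tendsto \<kappa> F f G" and H: "mixed_tendsto \<kappa> H h G"
    and FH: "\<forall>\<^sub>F s in G. F s \<in> Ck \<kappa> \<and> H s \<in> Ck \<kappa>" and f: "f \<in> Ck \<kappa>" and h: "h \<in> Ck \<kappa>"
  shows "mixed_tendsto \<kappa> (\<lambda>s y. F s y - H s y) (\<lambda>y. f y - h y) G"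
proof -
  have FH': "\<forall>\<^sub>F s in G. F s \<in> Ck \<kappa> \<and> (\<lambda>y. (-1) * H s y) \<in> Ck \<kappa>"
    using FH by eventually_elim (blast intro: Ck_cmult)
  have "mixed_tendsto \<kappa> (\<lambda>s y. (-1) * H s y) (\<lambda>y. (-1) * h y) G"
    using H FH h by (intro mixed_tendsto_scale tendsto_const) (auto elim: eventually_mono)
  from mixed_tendsto_add[OF F this FH' f Ck_cmult[OF h]] show ?thesis by simp
qed

lemma filterlim_diff_at_right_0:
  assumes "(t::real) > 0"
  shows "filterlim (\<lambda>h. t - h) (at t within {0<..}) (at_right 0)"
  unfolding filterlim_at
proof
  show "\<forall>\<^sub>F h in at_right 0. t - h \<in> {0<..} \<and> t - h \<noteq> t"
    using eventually_at_right_real[OF assms] by (rule eventually_mono) auto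
  have "((\<lambda>h. t - h) \<longlongrightarrow> t - 0) (at_right 0)"
    by (intro tendsto_intros)
  then show "((\<lambda>h. t - h) \<longlongrightarrow> t) (at_right 0)" by simp
qed

lemma mixed_has_derivative_left_quotient:
  assumes "t > 0" "mixed_has_derivative \<kappa> \<psi> d t"
  shows "mixed_tendsto \<kappa> (\<lambda>h y. (\<psi> t y - \<psi> (t - h) y) / h) d (at_right 0)"
proof -
  have "mixed_tendsto \<kappa> (\<lambda>s y. (\<psi> s y - \<psi> t y) / (s - t)) d (at t within {0<..})"
    using assms(2) unfolding mixed_has_derivative_def by blast
  from mixed_tendsto_compose[OF this filterlim_diff_at_right_0[OF assms(1)]]
  have "mixed_tendsto \<kappa> (\<lambda>h y. (\<psi> (t - h) y - \<psi> t y) / ((t - h) - t)) d (at_right 0)" .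
  moreover have "(\<lambda>h y. (\<psi> (t - h) y - \<psi> t y) / ((t - h) - t)) = (\<lambda>h y. (\<psi> t y - \<psi> (t - h) y) / h)"
    by (simp add: fun_eq_iff divide_minus_right minus_divide_left)
  ultimately show ?thesis by simp
qed

lemma mixed_has_derivative_left_continuous:
  fixes \<kappa> :: "'a::topological_space \<Rightarrow> real"
  assumes t: "t > 0" and \<psi>: "\<forall>s>0. \<psi> s \<in> Ck \<kappa>" and d: "mixed_has_derivative \<kappa> \<psi> d t"
  shows "mixed_tendsto \<kappa> (\<lambda>h. \<psi> (t - h)) (\<psi> t) (at_right 0)"
proof -
  define Q where "Q = (\<lambda>h y. (\<psi> t y - \<psi> (t - h) y) / h)"
  have small: "\<forall>\<^sub>F h in at_right 0. 0 < h \<and> h < t"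
    using eventually_at_right_real[OF t] by (rule eventually_mono) auto
  have "\<forall>\<^sub>F h in at_right 0. Q h \<in> Ck \<kappa>"
    using small by eventually_elim (use \<psi> t in \<open>auto simp: Q_def intro!: Ck_divide Ck_diff\<close>)
  moreover have "mixed_tendsto \<kappa> Q d (at_right 0)"
    unfolding Q_def by (rule mixed_has_derivative_left_quotient[OF t d])
  ultimately have "mixed_tendsto \<kappa> (\<lambda>h y. (- h) * Q h y) (\<lambda>y. - 0 * d y) (at_right 0)"
    using d unfolding mixed_has_derivative_def
    by (intro mixed_tendsto_scale tendsto_intros) auto
  moreover have "\<forall>\<^sub>F h in at_right 0. (\<lambda>y. (- h) * Q h y) = (\<lambda>y. \<psi> (t - h) y - \<psi> t y)"
    using small by eventually_elim (auto simp: Q_def fun_eq_iff)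
  ultimately show ?thesis
    by (simp add: mixed_tendsto_iff_diff_tendsto_zero[of _ _ "\<psi> t"] mixed_tendsto_cong)
qed

lemma C0_semigroup_closed: "C0_semigroup \<kappa> P \<Longrightarrow> t \<ge> 0 \<Longrightarrow> \<phi> \<in> Ck \<kappa> \<Longrightarrow> P t \<phi> \<in> Ck \<kappa>"
  unfolding C0_semigroup_def by blast

lemma C0_semigroup_zero: "C0_semigroup \<kappa> P \<Longrightarrow> \<phi> \<in> Ck \<kappa> \<Longrightarrow> P 0 \<phi> = \<phi>"
  unfolding C0_semigroup_def by blast

lemma C0_semigroup_add:
  "C0_semigroup \<kappa> P \<Longrightarrow> s \<ge> 0 \<Longrightarrow> t \<ge> 0 \<Longrightarrow> \<phi> \<in> Ck \<kappa> \<Longrightarrow> P s (P t \<phi>) = P (s + t) \<phi>"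
  unfolding C0_semigroup_def by blast

lemma C0_semigroup_equicontinuous:
  assumes "C0_semigroup \<kappa> P" "T \<ge> 0" "\<epsilon> > 0" "admissible K a"
  obtains C b \<delta> where "admissible C b" "\<delta> > 0"
    "\<And>t \<phi>1 \<phi>2. t \<in> {0..T} \<Longrightarrow> \<phi>1 \<in> Ck \<kappa> \<Longrightarrow> \<phi>2 \<in> Ck \<kappa> \<Longrightarrow>
       pmix \<kappa> C b (\<lambda>x. \<phi>1 x - \<phi>2 x) < \<delta> \<Longrightarrow> pmix \<kappa> K a (\<lambda>x. P t \<phi>1 x - P t \<phi>2 x) < \<epsilon>"
proof -
  have "\<exists>C b \<delta>. admissible C b \<and> \<delta> > 0 \<and> (\<forall>t\<in>{0..T}. \<forall>\<phi>1\<in>Ck \<kappa>. \<forall>\<phi>2\<in>Ck \<kappa>.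
      pmix \<kappa> C b (\<lambda>x. \<phi>1 x - \<phi>2 x) < \<delta> \<longrightarrow> pmix \<kappa> K a (\<lambda>x. P t \<phi>1 x - P t \<phi>2 x) < \<epsilon>)"
    using assms unfolding C0_semigroup_def by blast
  then show ?thesis using that by blast
qed

lemma C0_semigroup_strongly_continuous:
  "C0_semigroup \<kappa> P \<Longrightarrow> \<phi> \<in> Ck \<kappa> \<Longrightarrow> mixed_tendsto \<kappa> (\<lambda>h. P h \<phi>) \<phi> (at_right 0)"
  unfolding C0_semigroup_def mixed_tendsto_def by blast

text \<open>Point evaluation at \<open>x\<close> is a mixed seminorm (\<open>pmix_singleton\<close>), so the equicontinuity
  of \<open>P h\<close>, \<open>0 \<le> h \<le> 1\<close>, controls \<open>P h (F h) x - P h f x\<close>.\<close>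
lemma C0_semigroup_tendsto_pointwise:
  fixes \<kappa> :: "'a::topological_space \<Rightarrow> real"
  assumes P: "C0_semigroup \<kappa> P" and w: "weight \<kappa>"
    and F: "mixed_tendsto \<kappa> F f (at_right 0)" "\<forall>\<^sub>F h in at_right 0. F h \<in> Ck \<kappa>" and f: "f \<in> Ck \<kappa>"
  shows "((\<lambda>h. P h (F h) x) \<longlongrightarrow> f x) (at_right 0)"
proof -
  have "((\<lambda>h. P h (F h) x - P h f x) \<longlongrightarrow> 0) (at_right 0)"
  proof (rule tendstoI)
    fix e :: real assume "e > 0"
    have "\<kappa> x > 0" using w unfolding weight_def by blast
    obtain C b \<delta> where adm: "admissible C b" and "\<delta> > 0" and equi:
      "\<And>t \<phi>1 \<phi>2. t \<in> {0..1} \<Longrightarrow> \<phi>1 \<in> Ck \<kappa> \<Longrightarrow> \<phi>2 \<in> Ck \<kappa> \<Longrightarrow> pmix \<kappa> C b (\<lambda>y. \<phi>1 y - \<phi>2 y) < \<delta> \<Longrightarrow>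
         pmix \<kappa> (\<lambda>n. {x}) (\<lambda>n. 1 / real (Suc n)) (\<lambda>y. P t \<phi>1 y - P t \<phi>2 y) < \<kappa> x * e"
      using C0_semigroup_equicontinuous[OF P zero_le_one mult_pos_pos[OF \<open>\<kappa> x > 0\<close> \<open>e > 0\<close>]
          admissible_singleton[of x]] by blast
    have "\<forall>\<^sub>F h in at_right 0. pmix \<kappa> C b (\<lambda>y. F h y - f y) < \<delta>"
      using order_tendstoD(2)[OF F(1)[unfolded mixed_tendsto_def, rule_format, OF adm] \<open>\<delta> > 0\<close>] .
    moreover have "\<forall>\<^sub>F h in at_right (0::real). h \<in> {0..1}"
      by (rule eventually_at_right_real[of 0 1, THEN eventually_mono]) auto
    ultimately show "\<forall>\<^sub>F h in at_right 0. dist (P h (F h) x - P h f x) 0 < e"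
      using F(2)
    proof eventually_elim
      case (elim h)
      then have "\<kappa> x * \<bar>P h (F h) x - P h f x\<bar> < \<kappa> x * e"
        using equi[of h "F h" f] f \<open>\<kappa> x > 0\<close> unfolding pmix_singleton by (simp add: abs_mult)
      with \<open>\<kappa> x > 0\<close> show ?case by (simp add: dist_real_def)
    qed
  qed
  moreover have "((\<lambda>h. P h f x) \<longlongrightarrow> f x) (at_right 0)"
    by (rule mixed_tendsto_imp_tendsto[OF w C0_semigroup_strongly_continuous[OF P f]])
  ultimately show ?thesis by (rule Lim_transform[rotated])
qed

lemma C0_semigroup_orbit_diff:
  assumes P: "C0_semigroup \<kappa> P" and \<phi>: "\<phi> \<in> Ck \<kappa>" and "s \<ge> 0" "t \<ge> 0"
  shows "pmix \<kappa> K a (\<lambda>x. P s \<phi> x - P t \<phi> x)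
    = pmix \<kappa> K a (\<lambda>x. P (min s t) (P \<bar>s - t\<bar> \<phi>) x - P (min s t) \<phi> x)"
proof (cases "s \<le> t")
  case True
  then have "P (min s t) (P \<bar>s - t\<bar> \<phi>) = P t \<phi>"
    using C0_semigroup_add[OF P _ _ \<phi>, of s "t - s"] assms by simp
  with True show ?thesis by (simp add: min_def) (rule pmix_diff_commute)
next
  case False
  then have "P (min s t) (P \<bar>s - t\<bar> \<phi>) = P s \<phi>"
    using C0_semigroup_add[OF P _ _ \<phi>, of t "s - t"] assms by simp
  with False show ?thesis by (simp add: min_def)
qed

lemma C0_semigroup_orbit_continuous:
  fixes \<kappa> :: "'a::topological_space \<Rightarrow> real"
  assumes P: "C0_semigroup \<kappa> P" and \<phi>: "\<phi> \<in> Ck \<kappa>"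
  shows "mixed_continuous \<kappa> (\<lambda>t. P t \<phi>)"
  unfolding mixed_continuous_def mixed_tendsto_def
proof (intro conjI allI impI)
  fix t :: real assume "t \<ge> 0" then show "P t \<phi> \<in> Ck \<kappa>" by (rule C0_semigroup_closed[OF P _ \<phi>])
next
  fix t :: real and K :: "nat \<Rightarrow> 'a set" and a assume t: "t \<ge> 0" and adm: "admissible K a"
  show "((\<lambda>s. pmix \<kappa> K a (\<lambda>x. P s \<phi> x - P t \<phi> x)) \<longlongrightarrow> 0) (at t within {0..})"
  proof (rule tendstoI)
    fix e :: real assume "e > 0"
    obtain C b \<delta> where adm': "admissible C b" and "\<delta> > 0" and equi:
      "\<And>r \<phi>1 \<phi>2. r \<in> {0..t} \<Longrightarrow> \<phi>1 \<in> Ck \<kappa> \<Longrightarrow> \<phi>2 \<in> Ck \<kappa> \<Longrightarrow> pmix \<kappa> C b (\<lambda>x. \<phi>1 x - \<phi>2 x) < \<delta> \<Longrightarrow>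
         pmix \<kappa> K a (\<lambda>x. P r \<phi>1 x - P r \<phi>2 x) < e"
      using C0_semigroup_equicontinuous[OF P t \<open>e > 0\<close> adm] by blast
    have "\<forall>\<^sub>F r in at_right 0. pmix \<kappa> C b (\<lambda>x. P r \<phi> x - \<phi> x) < \<delta>"
      using order_tendstoD(2)[OF C0_semigroup_strongly_continuous[OF P \<phi>, unfolded mixed_tendsto_def,
          rule_format, OF adm'] \<open>\<delta> > 0\<close>] .
    then obtain r0 where "r0 > 0"
      and r0: "\<And>r. 0 < r \<Longrightarrow> r < r0 \<Longrightarrow> pmix \<kappa> C b (\<lambda>x. P r \<phi> x - \<phi> x) < \<delta>"
      unfolding eventually_at_right_field by auto
    show "\<forall>\<^sub>F s in at t within {0..}. dist (pmix \<kappa> K a (\<lambda>x. P s \<phi> x - P t \<phi> x)) 0 < e"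
      unfolding eventually_at
    proof (intro exI[of _ r0] conjI ballI impI)
      fix s :: real assume s: "s \<in> {0..}" and "s \<noteq> t \<and> dist s t < r0"
      then have "min s t \<in> {0..t}" "0 < \<bar>s - t\<bar>" "\<bar>s - t\<bar> < r0" using t by (auto simp: dist_real_def)
      then have "pmix \<kappa> K a (\<lambda>x. P (min s t) (P \<bar>s - t\<bar> \<phi>) x - P (min s t) \<phi> x) < e"
        using equi r0 \<phi> C0_semigroup_closed[OF P _ \<phi>] by auto
      moreover have "0 \<le> pmix \<kappa> K a (\<lambda>x. P s \<phi> x - P t \<phi> x)"
        using s t by (intro pmix_nonneg[OF adm] Ck_imp_weighted_bounded Ck_diff C0_semigroup_closed[OF P _ \<phi>]) auto
      ultimately show "dist (pmix \<kappa> K a (\<lambda>x. P s \<phi> x - P t \<phi> x)) 0 < e"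
        using C0_semigroup_orbit_diff[OF P \<phi>, of s t] s t by (simp add: dist_real_def)
    qed (rule \<open>r0 > 0\<close>)
  qed
qed

lemma gen_has_unique:
  assumes "weight \<kappa>" "gen_has \<kappa> P \<phi> L1" "gen_has \<kappa> P \<phi> L2"
  shows "L1 = L2"
proof
  fix x
  have "((\<lambda>h. (P h \<phi> x - \<phi> x) / h) \<longlongrightarrow> L x) (at_right 0)" if "gen_has \<kappa> P \<phi> L" for L
    using mixed_tendsto_imp_tendsto[OF assms(1)] that unfolding gen_has_def by blast
  with assms(2,3) show "L1 x = L2 x" by (blast intro: tendsto_unique[OF trivial_limit_at_right_real])
qed

lemma gen_has_gen:
  assumes "weight \<kappa>" "\<phi> \<in> gen_dom \<kappa> P"
  shows "gen_has \<kappa> P \<phi> (gen \<kappa> P \<phi>)"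
proof -
  obtain L where L: "gen_has \<kappa> P \<phi> L" using assms(2) unfolding gen_dom_def by blast
  show ?thesis unfolding gen_def
    by (rule theI[of "gen_has \<kappa> P \<phi>", OF L]) (rule gen_has_unique[OF assms(1) _ L])
qed

lemma gen_tendsto_pointwise:
  assumes "weight \<kappa>" "\<phi> \<in> gen_dom \<kappa> P"
  shows "((\<lambda>h. (P h \<phi> x - \<phi> x) / h) \<longlongrightarrow> gen \<kappa> P \<phi> x) (at_right 0)"
  using mixed_tendsto_imp_tendsto[OF assms(1)] gen_has_gen[OF assms] unfolding gen_has_def by blast

lemma convex_increasing_op_le_combination:
  assumes "increasing_op S T" "convex_op S T" "0 \<le> c" "c \<le> 1"
    and "f \<in> S" "g \<in> S" "w \<in> S" "(\<lambda>y. c * f y + (1 - c) * g y) \<in> S"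
    and "\<And>y. w y \<le> c * f y + (1 - c) * g y"
  shows "T w x \<le> c * T f x + (1 - c) * T g x"
proof -
  have "T w x \<le> T (\<lambda>y. c * f y + (1 - c) * g y) x"
    using assms(1)[unfolded increasing_op_def, rule_format, OF assms(7,8)] assms(9) by blast
  also have "\<dots> \<le> c * T f x + (1 - c) * T g x"
    using assms(2)[unfolded convex_op_def, rule_format, OF assms(5,6)] assms(3,4) by blast
  finally show ?thesis .
qed

lemma orbit_subsolution_test:
  fixes \<kappa> :: "'a::topological_space \<Rightarrow> real"
  assumes w: "weight \<kappa>" and P: "C0_semigroup \<kappa> P"
    and cvx: "\<And>h. h \<ge> 0 \<Longrightarrow> convex_op (Ck \<kappa>) (P h)"
    and inc: "\<And>h. h \<ge> 0 \<Longrightarrow> increasing_op (Ck \<kappa>) (P h)"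
    and \<phi>: "\<phi> \<in> Ck \<kappa>" and t: "t > 0"
    and \<psi>: "\<forall>s>0. \<psi> s \<in> Ck \<kappa> \<and> mixed_has_derivative \<kappa> \<psi> (\<psi>' s) s"
    and dom: "\<psi> t \<in> gen_dom \<kappa> P" and touch: "\<psi> t x = P t \<phi> x"
    and above: "\<forall>s>0. \<forall>y. P s \<phi> y \<le> \<psi> s y"
  shows "\<psi>' t x \<le> gen \<kappa> P (\<psi> t) x"
proof -
  define g d where "g = \<psi> t" and "d = \<psi>' t"
  define Q where "Q = (\<lambda>h y. (g y - \<psi> (t - h) y) / h)"
  define F where "F = (\<lambda>h y. g y - Q h y)"
  have g: "g \<in> Ck \<kappa>" and d: "d \<in> Ck \<kappa>" and dt: "mixed_has_derivative \<kappa> \<psi> d t"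
    using \<psi> t unfolding g_def d_def mixed_has_derivative_def by auto
  have small: "\<forall>\<^sub>F h in at_right 0. 0 < h \<and> h < 1 \<and> h < t"
    using eventually_at_right_real[of 0 "min 1 t"] t by (auto elim: eventually_mono)
  have \<psi>C: "\<forall>\<^sub>F h in at_right 0. \<psi> (t - h) \<in> Ck \<kappa>"
    using small by eventually_elim (use \<psi> in auto)
  then have QC: "\<forall>\<^sub>F h in at_right 0. Q h \<in> Ck \<kappa>"
    by eventually_elim (unfold Q_def, intro Ck_divide Ck_diff g)
  have "mixed_tendsto \<kappa> Q d (at_right 0)"
    unfolding Q_def g_def by (rule mixed_has_derivative_left_quotient[OF t dt])
  with QC g d have "mixed_tendsto \<kappa> F (\<lambda>y. g y - d y) (at_right 0)"
    unfolding F_def by (intro mixed_tendsto_diff mixed_tendsto_const) auto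
  moreover have FC: "\<forall>\<^sub>F h in at_right 0. F h \<in> Ck \<kappa>"
    using QC by eventually_elim (unfold F_def, intro Ck_diff g)
  ultimately have lim_F: "((\<lambda>h. P h (F h) x) \<longlongrightarrow> g x - d x) (at_right 0)"
    using C0_semigroup_tendsto_pointwise[OF P w] g d by (blast intro: Ck_diff)
  have lim_g: "((\<lambda>h. P h g x) \<longlongrightarrow> g x) (at_right 0)"
    by (rule mixed_tendsto_imp_tendsto[OF w C0_semigroup_strongly_continuous[OF P g]])
  have lim_gen: "((\<lambda>h. (P h g x - g x) / h) \<longlongrightarrow> gen \<kappa> P g x) (at_right 0)"
    using gen_tendsto_pointwise[OF w dom] unfolding g_def .
  have ineq: "\<forall>\<^sub>F h in at_right 0. 0 \<le> P h (F h) x - P h g x + (P h g x - g x) / h"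
    using small FC \<psi>C
  proof eventually_elim
    case (elim h)
    have split: "h * F h y + (1 - h) * g y = \<psi> (t - h) y" for y
      using elim by (simp add: F_def Q_def field_simps)
    have "g x = P h (P (t - h) \<phi>) x"
      using C0_semigroup_add[OF P _ _ \<phi>, of h "t - h"] elim touch by (simp add: g_def)
    also have "\<dots> \<le> h * P h (F h) x + (1 - h) * P h g x"
      using elim above g \<phi>
      by (intro convex_increasing_op_le_combination[OF inc cvx] C0_semigroup_closed[OF P])
        (auto simp: split)
    finally show ?case using elim by (simp add: field_simps)
  qed
  have "0 \<le> (g x - d x) - g x + gen \<kappa> P g x"
    by (rule tendsto_lowerbound[OF _ ineq trivial_limit_at_right_real]) (intro tendsto_intros lim_F lim_g lim_gen)
  then show ?thesis by (simp add: g_def d_def)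
qed

lemma orbit_supersolution_test:
  fixes \<kappa> :: "'a::topological_space \<Rightarrow> real"
  assumes w: "weight \<kappa>" and P: "C0_semigroup \<kappa> P"
    and cvx: "\<And>h. h \<ge> 0 \<Longrightarrow> convex_op (Ck \<kappa>) (P h)"
    and inc: "\<And>h. h \<ge> 0 \<Longrightarrow> increasing_op (Ck \<kappa>) (P h)"
    and \<phi>: "\<phi> \<in> Ck \<kappa>" and t: "t > 0"
    and \<psi>: "\<forall>s>0. \<psi> s \<in> Ck \<kappa> \<and> mixed_has_derivative \<kappa> \<psi> (\<psi>' s) s"
    and dom: "\<psi> t \<in> gen_dom \<kappa> P" and touch: "\<psi> t x = P t \<phi> x"
    and below: "\<forall>s>0. \<forall>y. \<psi> s y \<le> P s \<phi> y"
  shows "gen \<kappa> P (\<psi> t) x \<le> \<psi>' t x"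
proof -
  define g d where "g = \<psi> t" and "d = \<psi>' t"
  define Q where "Q = (\<lambda>h y. (g y - \<psi> (t - h) y) / h)"
  define F where "F = (\<lambda>h y. \<psi> (t - h) y + Q h y)"
  have g: "g \<in> Ck \<kappa>" and d: "d \<in> Ck \<kappa>" and dt: "mixed_has_derivative \<kappa> \<psi> d t"
    using \<psi> t unfolding g_def d_def mixed_has_derivative_def by auto
  have small: "\<forall>\<^sub>F h in at_right 0. 0 < h \<and> h < 1 \<and> h < t"
    using eventually_at_right_real[of 0 "min 1 t"] t by (auto elim: eventually_mono)
  have \<psi>C: "\<forall>\<^sub>F h in at_right 0. \<psi> (t - h) \<in> Ck \<kappa>"
    using small by eventually_elim (use \<psi> in auto)
  then have \<psi>QC: "\<forall>\<^sub>F h in at_right 0. \<psi> (t - h) \<in> Ck \<kappa> \<and> Q h \<in> Ck \<kappa>"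
    by eventually_elim (auto simp: Q_def intro!: Ck_divide Ck_diff g)
  then have FC: "\<forall>\<^sub>F h in at_right 0. F h \<in> Ck \<kappa>"
    by eventually_elim (unfold F_def, blast intro: Ck_add)
  have "mixed_tendsto \<kappa> Q d (at_right 0)"
    unfolding Q_def g_def by (rule mixed_has_derivative_left_quotient[OF t dt])
  moreover have "mixed_tendsto \<kappa> (\<lambda>h. \<psi> (t - h)) g (at_right 0)"
    unfolding g_def using t \<psi> dt by (intro mixed_has_derivative_left_continuous) auto
  ultimately have "mixed_tendsto \<kappa> F (\<lambda>y. g y + d y) (at_right 0)"
    unfolding F_def using \<psi>QC g d by (intro mixed_tendsto_add)
  then have lim_F: "((\<lambda>h. P h (F h) x) \<longlongrightarrow> g x + d x) (at_right 0)"
    using C0_semigroup_tendsto_pointwise[OF P w _ FC] g d by (blast intro: Ck_add)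
  have lim_gen: "((\<lambda>h. (P h g x - g x) / h) \<longlongrightarrow> gen \<kappa> P g x) (at_right 0)"
    using gen_tendsto_pointwise[OF w dom] unfolding g_def .
  have ineq: "\<forall>\<^sub>F h in at_right 0. (P h g x - g x) / h \<le> P h (F h) x - g x"
    using small FC \<psi>C
  proof eventually_elim
    case (elim h)
    have split: "h * F h y + (1 - h) * \<psi> (t - h) y = g y" for y
      using elim by (simp add: F_def Q_def field_simps)
    have "P h g x \<le> h * P h (F h) x + (1 - h) * P h (\<psi> (t - h)) x"
      using elim g by (intro convex_increasing_op_le_combination[OF inc cvx]) (auto simp: split)
    moreover have "P h (\<psi> (t - h)) x \<le> P h (P (t - h) \<phi>) x"
      using inc[of h] elim below C0_semigroup_closed[OF P _ \<phi>, of "t - h"]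
      unfolding increasing_op_def by auto
    moreover have "P h (P (t - h) \<phi>) x = g x"
      using C0_semigroup_add[OF P _ _ \<phi>, of h "t - h"] elim touch by (simp add: g_def)
    ultimately have "P h g x \<le> h * P h (F h) x + (1 - h) * g x"
      using elim by (smt (verit) mult_left_mono)
    then show ?case using elim by (simp add: field_simps)
  qed
  have "gen \<kappa> P g x \<le> (g x + d x) - g x"
    by (rule tendsto_le[OF trivial_limit_at_right_real _ lim_gen ineq]) (intro tendsto_intros lim_F)
  then show ?thesis by (simp add: g_def d_def)
qed

theorem theorem6p2:
  fixes \<kappa> :: "'a::topological_space \<Rightarrow> real"
    and P :: "real \<Rightarrow> ('a \<Rightarrow> real) \<Rightarrow> ('a \<Rightarrow> real)"
    and \<phi> :: "'a \<Rightarrow> real"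
  assumes "standing_space TYPE('a)"
    and "weight \<kappa>"
    and "C0_semigroup \<kappa> P"
    and "\<forall>t\<ge>0. convex_op (Ck \<kappa>) (P t) \<and> increasing_op (Ck \<kappa>) (P t)"
    and "\<phi> \<in> Ck \<kappa>"
  shows "visc_sol \<kappa> (gen_dom \<kappa> P) (gen \<kappa> P) (\<lambda>t. P t \<phi>) \<and> P 0 \<phi> = \<phi>"
proof -
  have cvx: "\<And>h. h \<ge> 0 \<Longrightarrow> convex_op (Ck \<kappa>) (P h)"
    and inc: "\<And>h. h \<ge> 0 \<Longrightarrow> increasing_op (Ck \<kappa>) (P h)"
    using assms(4) by auto
  have cont: "mixed_continuous \<kappa> (\<lambda>t. P t \<phi>)"
    by (rule C0_semigroup_orbit_continuous[OF assms(3,5)])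
  have "visc_sub \<kappa> (gen_dom \<kappa> P) (gen \<kappa> P) (\<lambda>t. P t \<phi>)"
    unfolding visc_sub_def using cont orbit_subsolution_test[OF assms(2,3) cvx inc assms(5)] by blast
  moreover have "visc_super \<kappa> (gen_dom \<kappa> P) (gen \<kappa> P) (\<lambda>t. P t \<phi>)"
    unfolding visc_super_def using cont orbit_supersolution_test[OF assms(2,3) cvx inc assms(5)] by blast
  ultimately show ?thesis
    unfolding visc_sol_def using C0_semigroup_zero[OF assms(3,5)] by blast
qed

end
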